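(* Let \(a,b,c\) be positive integers, \(m\) a positive integer that is not a perfect square, with \(\gcd(am,b^2-c^2m)=1\), and let \(A,B\in\mathbb Z\). Let \((\bar x,\bar y,\bar z,\bar w)\) be the unique element of \(\mathbb Z^4\) with \(0\leq\bar z<am\), \(0\leq\bar w<a\) satisfying \(a\sqrt m(\bar x+\bar y\sqrt m)+(b+c\sqrt m)(\bar z+\bar w\sqrt m)=A+B\sqrt m\). Then the equation \(a\sqrt m(x+y\sqrt m)+(b+c\sqrt m)(z+w\sqrt m)=A+B\sqrt m\) has a solution with \(x,y,z,w\in\mathbb N\) if and only if \(\bar x\geq 0\) and \(\bar y\geq 0\).
   Context: \(\mathbb N\) denotes the set of non-negative integers. (Existence and uniqueness of \((\bar x,\bar y,\bar z,\bar w)\) under the stated hypotheses may be assumed.) *)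

theory Defs
  imports Complex_Main
begin

end

theory Submission
  imports Defs "HOL-Computational_Algebra.Nth_Powers"
begin

text \<open>
  Work in \<open>\<int>[\<surd>m]\<close> with \<open>\<beta> = b + c\<surd>m\<close>. Two solutions of the equation differ by a pair
  \<open>(\<delta>X, \<delta>Z)\<close> with \<open>a\<surd>m \<delta>X = -\<beta> \<delta>Z\<close>. Since the norm \<open>b\<^sup>2 - c\<^sup>2m\<close> of \<open>\<beta>\<close> is coprime to
  \<open>am\<close>, this forces \<open>\<delta>Z = a\<surd>m (l + k\<surd>m)\<close> and \<open>\<delta>X = -\<beta> (l + k\<surd>m)\<close>. For a solution with
  \<open>z, w \<ge> 0\<close>, the bounds \<open>0 \<le> z\<^sub>0 < am\<close>, \<open>0 \<le> w\<^sub>0 < a\<close> on the reduced solution give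
  \<open>k, l \<ge> 0\<close>, so the reduced \<open>x\<^sub>0, y\<^sub>0\<close> dominate the \<open>x, y\<close> of any such solution.
\<close>

lemma sqrt_nonsquare_coeff_eq_0:
  fixes m :: nat and p q :: int
  assumes nonsquare: "\<not> (\<exists>k::nat. k ^ 2 = m)"
    and eq: "real_of_int p + real_of_int q * sqrt (real m) = 0"
  shows "q = 0"
proof (rule ccontr)
  assume q: "q \<noteq> 0"
  have "real_of_int q * sqrt (real m) = - real_of_int p" using eq by linarith
  hence "(real_of_int q * sqrt (real m))^2 = (real_of_int p)^2" by simp
  hence "real_of_int (q^2 * int m) = real_of_int (p^2)"
    by (simp add: power_mult_distrib)
  hence "int ((nat \<bar>q\<bar>)^2 * m) = int ((nat \<bar>p\<bar>)^2)"
    by (simp only: of_int_eq_iff) (simp add: power2_abs)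
  hence "(nat \<bar>q\<bar>)^2 * m = (nat \<bar>p\<bar>)^2"
    by (simp only: of_nat_eq_iff)
  hence "is_nth_power 2 ((nat \<bar>q\<bar>)^2 * m)" by simp
  hence "is_nth_power 2 m"
    by (subst (asm) is_nth_power_mult_cancel_left) (use q in auto)
  with nonsquare show False by (auto elim: is_nth_powerE)
qed

lemma sqrt_nonsquare_coeffs_eq_iff:
  fixes m :: nat and p q p' q' :: int
  assumes "\<not> (\<exists>k::nat. k ^ 2 = m)"
  shows "real_of_int p + real_of_int q * sqrt (real m) = real_of_int p' + real_of_int q' * sqrt (real m)
         \<longleftrightarrow> p = p' \<and> q = q'"
proof
  assume eq: "real_of_int p + real_of_int q * sqrt (real m) = real_of_int p' + real_of_int q' * sqrt (real m)"
  hence "real_of_int (p - p') + real_of_int (q - q') * sqrt (real m) = 0"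
    by (simp add: algebra_simps)
  hence "q - q' = 0" by (rule sqrt_nonsquare_coeff_eq_0[OF assms])
  with eq show "p = p' \<and> q = q'" by simp
qed simp

lemma equation_lhs_coeffs:
  fixes a b c m :: nat and x y z w :: int
  shows "real a * sqrt (real m) * (real_of_int x + real_of_int y * sqrt (real m))
         + (real b + real c * sqrt (real m)) * (real_of_int z + real_of_int w * sqrt (real m))
       = real_of_int (int a * int m * y + int b * z + int c * int m * w)
         + real_of_int (int a * x + int c * z + int b * w) * sqrt (real m)"
proof -
  define r where "r = sqrt (real m)"
  have "real a * r * (real_of_int x + real_of_int y * r)
         + (real b + real c * r) * (real_of_int z + real_of_int w * r)
       = real a * real_of_int y * (r * r) + real b * real_of_int z + real c * real_of_int w * (r * r)
         + (real a * real_of_int x + real c * real_of_int z + real b * real_of_int w) * r"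
    by (simp add: algebra_simps)
  also have "r * r = real m" unfolding r_def by simp
  finally show ?thesis unfolding r_def by simp
qed

text \<open>
  Eliminating
  once \<open>dw\<close> and once \<open>dz\<close> multiplies the remaining unknown by the norm \<open>b\<^sup>2 - c\<^sup>2m\<close>.
\<close>
lemma kernel_solution_form:
  fixes a b c m dx dy dz dw :: int
  assumes "a \<noteq> 0" and "m \<noteq> 0" and coprime: "coprime (a * m) (b^2 - c^2 * m)"
    and e1: "a * m * dy + b * dz + c * m * dw = 0"
    and e2: "a * dx + c * dz + b * dw = 0"
  obtains k l where "dz = a * m * k" and "dw = a * l"
    and "dx = - (c * m * k + b * l)" and "dy = - (b * k + c * l)"
proof -
  define N where "N = b^2 - c^2 * m"
  have "N * dz = b * (a * m * dy + b * dz + c * m * dw) - c * m * (a * dx + c * dz + b * dw)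
                 + a * m * (c * dx - b * dy)"
    unfolding N_def by (simp add: algebra_simps power2_eq_square)
  hence "N * dz = a * m * (c * dx - b * dy)" using e1 e2 by simp
  hence "a * m dvd N * dz" by simp
  hence "a * m dvd dz" using coprime_dvd_mult_right_iff coprime unfolding N_def by blast
  then obtain k where k: "dz = a * m * k" by (elim dvdE)
  have "N * dw = b * (a * dx + c * dz + b * dw) - c * (a * m * dy + b * dz + c * m * dw)
                 + a * (c * m * dy - b * dx)"
    unfolding N_def by (simp add: algebra_simps power2_eq_square)
  hence "N * dw = a * (c * m * dy - b * dx)" using e1 e2 by simp
  moreover have "coprime a N" using coprime unfolding N_def by simp
  ultimately have "a dvd dw" using coprime_dvd_mult_right_iff by (metis dvd_triv_left)
  then obtain l where l: "dw = a * l" by (elim dvdE)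
  have "a * (dx + c * m * k + b * l) = 0" using e2 k l by (simp add: algebra_simps)
  hence "dx = - (c * m * k + b * l)" using \<open>a \<noteq> 0\<close> by simp
  moreover have "(a * m) * (dy + b * k + c * l) = 0" using e1 k l by (simp add: algebra_simps)
  hence "dy = - (b * k + c * l)" using \<open>a \<noteq> 0\<close> \<open>m \<noteq> 0\<close> by simp
  ultimately show ?thesis using k l that by blast
qed

lemma nonneg_multiplier_of_shift:
  fixes r n k :: int
  assumes "0 \<le> r + n * k" and "0 \<le> r" and "r < n"
  shows "0 \<le> k"
proof (rule ccontr)
  assume "\<not> 0 \<le> k"
  hence "n * k \<le> n * (-1)" using \<open>0 \<le> r\<close> \<open>r < n\<close> by (intro mult_left_mono) simp_all
  with assms show False by linarith
qed

lemma reduced_solution_dominates: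
  fixes a b c m x y z w x0 y0 z0 w0 :: int
  assumes "0 < a" and "0 < m" and "0 \<le> b" and "0 \<le> c"
    and "coprime (a * m) (b^2 - c^2 * m)"
    and "a * m * y + b * z + c * m * w = a * m * y0 + b * z0 + c * m * w0"
    and "a * x + c * z + b * w = a * x0 + c * z0 + b * w0"
    and "0 \<le> z" and "0 \<le> w" and "0 \<le> z0" and "z0 < a * m" and "0 \<le> w0" and "w0 < a"
  shows "x \<le> x0 \<and> y \<le> y0"
proof -
  have e1: "a * m * (y - y0) + b * (z - z0) + c * m * (w - w0) = 0"
    unfolding right_diff_distrib using assms(6) by linarith
  have e2: "a * (x - x0) + c * (z - z0) + b * (w - w0) = 0"
    unfolding right_diff_distrib using assms(7) by linarith
  obtain k l where k: "z - z0 = a * m * k" and l: "w - w0 = a * l"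
    and x: "x - x0 = - (c * m * k + b * l)" and y: "y - y0 = - (b * k + c * l)"
    by (rule kernel_solution_form[OF _ _ assms(5) e1 e2]) (use assms(1,2) in auto)
  have "0 \<le> z0 + a * m * k" using k \<open>0 \<le> z\<close> by linarith
  hence "0 \<le> k" using \<open>0 \<le> z0\<close> \<open>z0 < a * m\<close> by (rule nonneg_multiplier_of_shift)
  moreover have "0 \<le> w0 + a * l" using l \<open>0 \<le> w\<close> by linarith
  hence "0 \<le> l" using \<open>0 \<le> w0\<close> \<open>w0 < a\<close> by (rule nonneg_multiplier_of_shift)
  ultimately have "0 \<le> c * m * k + b * l" "0 \<le> b * k + c * l"
    using assms(2-4) by (auto intro!: add_nonneg_nonneg mult_nonneg_nonneg)
  with x y show ?thesis by linarith
qed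

theorem lemma12:
  fixes a b c m :: nat and A B :: int and xb yb zb wb :: int
  assumes "a > 0" and "b > 0" and "c > 0" and "m > 0"
    and "\<not> (\<exists>k::nat. k ^ 2 = m)"
    and "gcd (int a * int m) (int b ^ 2 - int c ^ 2 * int m) = 1"
    and "0 \<le> zb" and "zb < int a * int m" and "0 \<le> wb" and "wb < int a"
    and "real a * sqrt (real m) * (real_of_int xb + real_of_int yb * sqrt (real m))
         + (real b + real c * sqrt (real m)) * (real_of_int zb + real_of_int wb * sqrt (real m))
         = real_of_int A + real_of_int B * sqrt (real m)"
  shows "(\<exists>x y z w :: nat.
            real a * sqrt (real m) * (real x + real y * sqrt (real m))
            + (real b + real c * sqrt (real m)) * (real z + real w * sqrt (real m))
            = real_of_int A + real_of_int B * sqrt (real m))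
         \<longleftrightarrow> (xb \<ge> 0 \<and> yb \<ge> 0)"
proof (rule iffI, elim exE, goal_cases)
  case (1 x y z w)
  note coeffs_eq = sqrt_nonsquare_coeffs_eq_iff[OF assms(5)]
  have "int a * int m * int y + int b * int z + int c * int m * int w = A
        \<and> int a * int x + int c * int z + int b * int w = B"
    using 1
    unfolding equation_lhs_coeffs[where x = "int x" and y = "int y" and z = "int z" and w = "int w",
        unfolded of_int_of_nat_eq] coeffs_eq .
  moreover have "int a * int m * yb + int b * zb + int c * int m * wb = A
                 \<and> int a * xb + int c * zb + int b * wb = B"
    using assms(11) unfolding equation_lhs_coeffs coeffs_eq .
  ultimately have "int x \<le> xb \<and> int y \<le> yb"
    using assms(1-4,6-10)
    by (intro reduced_solution_dominates[where a = "int a" and b = "int b" and c = "int c"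
          and m = "int m" and z = "int z" and w = "int w" and z0 = zb and w0 = wb])
       (simp_all add: coprime_iff_gcd_eq_1)
  then show ?case by linarith
next
  case 2
  with assms(7,9,11) show ?case
    by (intro exI[of _ "nat xb"] exI[of _ "nat yb"] exI[of _ "nat zb"] exI[of _ "nat wb"])
       (simp only: of_nat_nat)
qed

end
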